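(* Consider the STAIR code with parameters $n,r,m,\mathbf{e}$ (and outside global parity symbols) as defined in the context. Let $F\subseteq\{0,\dots,n-1\}$ be a set of at most $m$ columns of the stripe (entirely failed chunks), and for each column $j\notin F$ let $L_j\subseteq\{0,\dots,r-1\}$ be a set of rows (lost sectors in column $j$). Suppose the number $t$ of columns $j\notin F$ with $L_j\neq\emptyset$ satisfies $t\le m'$, and that, writing the nonzero sizes $|L_j|$ in increasing order as $f_0\le f_1\le\cdots\le f_{t-1}$, we have $f_{t-1-i}\le e_{m'-1-i}$ for all $0\le i\le t-1$. Then the entire stripe (all data symbols $d_{i,j}$ and row parity symbols $p_{i,k}$) is uniquely determined by the symbols of the stripe in surviving positions (positions $(i,j)$ with $j\notin F$ and $i\notin L_j$) together with all $s$ global parity symbols $g_{h,l}$. Equivalently, if two data matrices give stripes that agree on all surviving positions and have identical global parity symbols, then the two data matrices are equal.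
   Context: Parameters: integers $n,r,m,m'$ with $1\le m<n$, $1\le m'\le n-m$, and a vector $\mathbf{e}=(e_0,\dots,e_{m'-1})$ of integers with $0<e_0\le e_1\le\cdots\le e_{m'-1}\le r$; $s=\sum_{l}e_l$. Work over a finite field $\mathbb{F}=GF(2^w)$ with $n+m'\le 2^w$ and $r+e_{m'-1}\le 2^w$. An $(\eta,\kappa)$-code is a linear maximum distance separable (MDS) code of length $\eta$ and dimension $\kappa$: any $\kappa$ coordinates of a codeword determine the codeword; it is systematic if its generator matrix has the form $(\mathbf{I}_\kappa\mid\cdot)$, so a codeword consists of the $\kappa$ input (data) symbols followed by $\eta-\kappa$ parity symbols. Let $\mathcal{C}_{row}$ be a systematic $(n+m',n-m)$-code and $\mathcal{C}_{col}$ a systematic $(r+e_{m'-1},r)$-code over $\mathbb{F}$ (e.g. Cauchy Reed–Solomon codes). STAIR encoding (outside global parities): data symbols $d_{i,j}$, $0\le i\le r-1$, $0\le j\le n-m-1$. Phase 1: for each row $i$, encoding $(d_{i,0},\dots,d_{i,n-m-1})$ with $\mathcal{C}_{row}$ gives $m$ row parity symbols $p_{i,0},\dots,p_{i,m-1}$ followed by $m'$ intermediate parity symbols $p'_{i,0},\dots,p'_{i,m'-1}$. Phase 2: for each $l$, encoding $(p'_{0,l},\dots,p'_{r-1,l})$ with $\mathcal{C}_{col}$ gives $e_{m'-1}$ parity symbols $c_{0,l},\dots,c_{e_{m'-1}-1,l}$; the global parity symbols are $g_{h,l}=c_{h,l}$ for $0\le h\le e_l-1$ (the remaining ones are discarded,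 as are the intermediate parities). The stripe is the $r\times n$ array whose row $i$ is $(d_{i,0},\dots,d_{i,n-m-1},p_{i,0},\dots,p_{i,m-1})$ (columns $0,\dots,n-m-1$ are data chunks, columns $n-m,\dots,n-1$ are row parity chunks); the $s$ global parity symbols are stored outside the stripe and are always available. *)

theory Defs
  imports Main
begin

text \<open>A systematic linear code of dimension kappa is given by its parity part P
  (a kappa x (eta-kappa) matrix, entries P i k): generator matrix (I | P).\<close>
definition sys_cw :: "nat \<Rightarrow> (nat \<Rightarrow> nat \<Rightarrow> 'a::field) \<Rightarrow> (nat \<Rightarrow> 'a) \<Rightarrow> nat \<Rightarrow> 'a" where
  "sys_cw \<kappa> P x j = (if j < \<kappa> then x j else (\<Sum>i<\<kappa>. x i * P i (j - \<kappa>)))"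

definition is_sys_MDS :: "nat \<Rightarrow> nat \<Rightarrow> (nat \<Rightarrow> nat \<Rightarrow> 'a::field) \<Rightarrow> bool" where
  "is_sys_MDS \<eta> \<kappa> P \<longleftrightarrow> \<kappa> \<le> \<eta> \<and>
     (\<forall>S \<subseteq> {..<\<eta>}. card S = \<kappa> \<longrightarrow>
        (\<forall>x y. (\<forall>j\<in>S. sys_cw \<kappa> P x j = sys_cw \<kappa> P y j) \<longrightarrow>
               (\<forall>j<\<eta>. sys_cw \<kappa> P x j = sys_cw \<kappa> P y j)))"

text \<open>Stripe entry (i,j), j < n: data symbol for j < n-m, row parity p_{i,j-(n-m)} otherwise.\<close>
definition stair_stripe :: "nat \<Rightarrow> nat \<Rightarrow> (nat \<Rightarrow> nat \<Rightarrow> 'a::field) \<Rightarrow> (nat \<Rightarrow> nat \<Rightarrow> 'a) \<Rightarrow> nat \<Rightarrow> nat \<Rightarrow> 'a" where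
  "stair_stripe n m Prow d i j = sys_cw (n - m) Prow (d i) j"

text \<open>Intermediate parity p'_{i,l} (coordinate n-m+m+l = n+l of the row codeword).\<close>
definition stair_interm :: "nat \<Rightarrow> nat \<Rightarrow> (nat \<Rightarrow> nat \<Rightarrow> 'a::field) \<Rightarrow> (nat \<Rightarrow> nat \<Rightarrow> 'a) \<Rightarrow> nat \<Rightarrow> nat \<Rightarrow> 'a" where
  "stair_interm n m Prow d i l = sys_cw (n - m) Prow (d i) (n + l)"

text \<open>Global parity g_{h,l} = c_{h,l}: parity h of the column code applied to
  (p'_{0,l},...,p'_{r-1,l}).\<close>
definition stair_global :: "nat \<Rightarrow> nat \<Rightarrow> nat \<Rightarrow> (nat \<Rightarrow> nat \<Rightarrow> 'a::field) \<Rightarrow> (nat \<Rightarrow> nat \<Rightarrow> 'a) \<Rightarrow> (nat \<Rightarrow> nat \<Rightarrow> 'a) \<Rightarrow> nat \<Rightarrow> nat \<Rightarrow> 'a" where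
  "stair_global n m r Prow Pcol d h l = sys_cw r Pcol (\<lambda>i. stair_interm n m Prow d i l) (r + h)"

end

theory Submission
  imports Defs
begin

text \<open>
  View each row of the stripe as a codeword of the row code of length n + m'
  (its last m' coordinates are the intermediate parities) and add e_(m'-1)
  virtual rows: virtual row h holds, in every column j, the h-th column-code
  parity of column j.  Because both codes are linear, every virtual row is
  again a row codeword (product-code property), and the global parities g_(h,l)
  are exactly the virtual-row entries in the intermediate columns n + l.

  The lost columns are then recovered by peeling.  If k of the t lossy columns
  are already known, then every virtual row h < e_(m'-t+k) agrees in at least
  n - |F| >= n - m positions (clean columns, known lossy columns, and the
  t - k global parities g_(h,l) with l >= m'-t+k), so it is decoded by the row
  code; a lossy column with at most e_(m'-t+k) lost sectors then has r agreeing
  coordinates of its column codeword and is decoded by the column code.  The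
  hypothesis on the sorted loss sizes guarantees that at least k + 1 columns
  qualify, so all lossy columns are recovered, and finally every row is
  decoded by the row code from its n - |F| surviving columns.
\<close>

subsection \<open>Systematic MDS codes\<close>

lemma sys_cw_systematic: "j < \<kappa> \<Longrightarrow> sys_cw \<kappa> P x j = x j"
  by (simp add: sys_cw_def)

lemma sys_cw_cong: "(\<And>i. i < \<kappa> \<Longrightarrow> x i = y i) \<Longrightarrow> sys_cw \<kappa> P x j = sys_cw \<kappa> P y j"
  unfolding sys_cw_def by (auto intro!: sum.cong)

lemma sys_MDS_decode:
  assumes "is_sys_MDS \<eta> \<kappa> P" and "K \<subseteq> {..<\<eta>}" and "\<kappa> \<le> card K"
    and "\<forall>j\<in>K. sys_cw \<kappa> P x j = sys_cw \<kappa> P y j" and "j < \<eta>"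
  shows "sys_cw \<kappa> P x j = sys_cw \<kappa> P y j"
proof -
  have "finite K" using assms(2) finite_subset by blast
  then obtain S where "S \<subseteq> K" "card S = \<kappa>"
    using assms(3) obtain_subset_with_card_n by metis
  then show ?thesis
    using assms unfolding is_sys_MDS_def by blast
qed

subsection \<open>Column parities and the product-code property\<close>

text \<open>Entry (h, j) of the h-th virtual row of an array X with r rows: the h-th
  parity symbol of the column code applied to column j of X.\<close>
definition col_parity :: "nat \<Rightarrow> (nat \<Rightarrow> nat \<Rightarrow> 'a::field) \<Rightarrow> (nat \<Rightarrow> nat \<Rightarrow> 'a) \<Rightarrow> nat \<Rightarrow> nat \<Rightarrow> 'a"
  where "col_parity r Pc X h j = sys_cw r Pc (\<lambda>i. X i j) (r + h)"

lemma col_parity_cong: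
  "(\<And>i. i < r \<Longrightarrow> X i j = Y i j) \<Longrightarrow> col_parity r Pc X h j = col_parity r Pc Y h j"
  unfolding col_parity_def by (rule sys_cw_cong)

text \<open>If every row of X is a codeword of a systematic code, so is every virtual
  row: the two encodings are linear maps and commute.\<close>
lemma col_parity_row_codeword:
  "col_parity r Pc (\<lambda>i. sys_cw \<kappa> P (x i)) h j
   = sys_cw \<kappa> P (col_parity r Pc (\<lambda>i. sys_cw \<kappa> P (x i)) h) j"
  (is "?V j = sys_cw \<kappa> P ?V j")
proof (cases "j < \<kappa>")
  case True
  then show ?thesis by (simp add: sys_cw_systematic)
next
  case False
  have "?V j = (\<Sum>i<r. (\<Sum>k<\<kappa>. x i k * P k (j - \<kappa>)) * Pc i h)"
    using False by (simp add: col_parity_def sys_cw_def)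
  also have "\<dots> = (\<Sum>k<\<kappa>. (\<Sum>i<r. x i k * Pc i h) * P k (j - \<kappa>))"
    by (simp add: sum_distrib_left sum_distrib_right mult_ac sum.swap[of _ "{..<r}"])
  also have "\<dots> = sys_cw \<kappa> P ?V j"
    using False by (simp add: col_parity_def sys_cw_def)
  finally show ?thesis .
qed

lemma stripe_virtual_row_codeword:
  "col_parity r Pc (stair_stripe n m P x) h j
   = sys_cw (n - m) P (col_parity r Pc (stair_stripe n m P x) h) j"
  using col_parity_row_codeword[of r Pc "n - m" P x h j]
  by (simp add: stair_stripe_def[abs_def])

lemma peeling:
  assumes fin: "finite J"
    and step: "\<And>k j. k < card J \<Longrightarrow> k \<le> card {j\<in>J. good j} \<Longrightarrow> j \<in> J \<Longrightarrow> c j \<le> b k \<Longrightarrow> good j"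
    and enough: "\<And>k. k < card J \<Longrightarrow> k + 1 \<le> card {j\<in>J. c j \<le> b k}"
  shows "\<forall>j\<in>J. good j"
proof -
  have "k \<le> card {j\<in>J. good j}" if "k \<le> card J" for k
    using that
  proof (induction k)
    case 0
    then show ?case by simp
  next
    case (Suc k)
    then have k: "k < card J" and IH: "k \<le> card {j\<in>J. good j}" by auto
    have "{j\<in>J. c j \<le> b k} \<subseteq> {j\<in>J. good j}"
      using step[OF k IH] by blast
    then have "card {j\<in>J. c j \<le> b k} \<le> card {j\<in>J. good j}"
      using fin by (intro card_mono) auto
    with enough[OF k] show ?case by simp
  qed
  then have "card J \<le> card {j\<in>J. good j}" by simp
  then have "{j\<in>J. good j} = J"
    using fin by (intro card_seteq) auto
  then show ?thesis by blast
qed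

lemma sorted_rank_count:
  assumes "finite J" and "k < card J"
  shows "k + 1 \<le> card {j\<in>J. f j \<le> sort (map f (sorted_list_of_set J)) ! k}"
proof -
  define fs where "fs = sort (map f (sorted_list_of_set J))"
  define x where "x = fs ! k"
  have len: "length fs = card J" using assms(1) by (simp add: fs_def)
  have "sorted fs" by (simp add: fs_def)
  then have "{..k} \<subseteq> {i. i < length fs \<and> fs ! i \<le> x}"
    using assms(2) len by (auto simp: x_def sorted_nth_mono)
  then have "card {..k} \<le> card {i. i < length fs \<and> fs ! i \<le> x}"
    by (intro card_mono) auto
  then have "k + 1 \<le> card {i. i < length fs \<and> fs ! i \<le> x}"
    by simp
  also have "\<dots> = length (filter (\<lambda>v. v \<le> x) fs)"
    by (simp add: length_filter_conv_card)
  also have "\<dots> = length (filter (\<lambda>j. f j \<le> x) (sorted_list_of_set J))"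
    by (simp add: fs_def filter_sort filter_map comp_def)
  also have "\<dots> = card {j\<in>J. f j \<le> x}"
    using assms(1) by (subst distinct_card[symmetric]) (auto intro: arg_cong[where f = card])
  finally show ?thesis by (simp add: x_def fs_def)
qed

subsection \<open>The erasure scenario\<close>

locale stair_repair =
  fixes n r m m' :: nat and e :: "nat list"
    and Prow Pcol :: "nat \<Rightarrow> nat \<Rightarrow> 'a::field"
    and d d' :: "nat \<Rightarrow> nat \<Rightarrow> 'a"
    and F :: "nat set" and L :: "nat \<Rightarrow> nat set"
  assumes e_len: "length e = m'"
    and e_sorted: "sorted e"
    and row_MDS: "is_sys_MDS (n + m') (n - m) Prow"
    and col_MDS: "is_sys_MDS (r + e ! (m' - 1)) r Pcol"
    and F_sub: "F \<subseteq> {..<n}" and F_card: "card F \<le> m"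
    and L_sub: "\<forall>j\<in>{..<n} - F. L j \<subseteq> {..<r}"
    and t_bound: "card {j \<in> {..<n} - F. L j \<noteq> {}} \<le> m'"
    and f_bound: "let J = {j \<in> {..<n} - F. L j \<noteq> {}};
                      t = card J;
                      fs = sort (map (\<lambda>j. card (L j)) (sorted_list_of_set J))
                  in \<forall>i<t. fs ! (t - 1 - i) \<le> e ! (m' - 1 - i)"
    and surv: "\<forall>i<r. \<forall>j<n. j \<notin> F \<and> i \<notin> L j \<longrightarrow>
                 stair_stripe n m Prow d i j = stair_stripe n m Prow d' i j"
    and glob: "\<forall>l<m'. \<forall>h<e ! l.
                 stair_global n m r Prow Pcol d h l = stair_global n m r Prow Pcol d' h l"
begin

text \<open>The full row codewords (stripe plus intermediate parities) and their virtual rows.\<close>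
abbreviation X :: "nat \<Rightarrow> nat \<Rightarrow> 'a" where "X \<equiv> stair_stripe n m Prow d"
abbreviation Y :: "nat \<Rightarrow> nat \<Rightarrow> 'a" where "Y \<equiv> stair_stripe n m Prow d'"
abbreviation VX :: "nat \<Rightarrow> nat \<Rightarrow> 'a" where "VX \<equiv> col_parity r Pcol X"
abbreviation VY :: "nat \<Rightarrow> nat \<Rightarrow> 'a" where "VY \<equiv> col_parity r Pcol Y"

definition lost_cols :: "nat set" where "lost_cols = {j \<in> {..<n} - F. L j \<noteq> {}}"
definition clean_cols :: "nat set" where "clean_cols = {..<n} - F - lost_cols"
definition known :: "nat \<Rightarrow> bool" where "known j \<longleftrightarrow> (\<forall>i<r. X i j = Y i j)"

abbreviation t :: nat where "t \<equiv> card lost_cols"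
abbreviation E :: nat where "E \<equiv> e ! (m' - 1)"

lemma lost_cols_finite: "finite lost_cols"
  by (simp add: lost_cols_def)

lemma lost_cols_sub: "lost_cols \<subseteq> {..<n} - F"
  by (auto simp: lost_cols_def)

lemma t_le_m': "t \<le> m'"
  using t_bound by (simp add: lost_cols_def)

lemma card_surviving: "card ({..<n} - F) = n - card F"
  using F_sub by (simp add: card_Diff_subset finite_subset)

lemma card_clean_cols: "card clean_cols + t = n - card F"
proof -
  have "t \<le> card ({..<n} - F)"
    using lost_cols_sub by (intro card_mono) auto
  then show ?thesis
    using lost_cols_sub lost_cols_finite card_surviving
    by (simp add: clean_cols_def card_Diff_subset)
qed

lemma e_mono: "a \<le> b \<Longrightarrow> b < m' \<Longrightarrow> e ! a \<le> e ! b"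
  using e_sorted e_len by (simp add: sorted_nth_mono)

lemma clean_col_known: "j \<in> clean_cols \<Longrightarrow> known j"
  using surv by (auto simp: clean_cols_def lost_cols_def known_def stair_stripe_def)

text \<open>The global parities are the virtual-row entries in the intermediate columns.\<close>
lemma global_parity_agree: "l < m' \<Longrightarrow> h < e ! l \<Longrightarrow> VX h (n + l) = VY h (n + l)"
  using glob by (simp add: stair_global_def stair_interm_def stair_stripe_def col_parity_def)

text \<open>Virtual rows are row codewords, so n - m agreeing positions determine them.\<close>
lemma virtual_row_decode:
  assumes "n - m \<le> card {j. j < n + m' \<and> VX h j = VY h j}" and "j < n + m'"
  shows "VX h j = VY h j"
  using sys_MDS_decode[OF row_MDS _ assms(1), of "VX h" "VY h"] assms(2)
  by (auto simp: stripe_virtual_row_codeword[symmetric])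

text \<open>Peeling step, row direction: with k known lossy columns, every virtual row
  h < e_(m'-t+k) is recovered, since the clean columns, the known lossy columns
  and the t - k global parities in columns n + l (l >= m'-t+k) give n - |F|
  agreeing positions.\<close>
lemma virtual_row_recovered:
  assumes k: "k < t" and known_k: "k \<le> card {j\<in>lost_cols. known j}"
    and h: "h < e ! (m' - t + k)" and j: "j < n + m'"
  shows "VX h j = VY h j"
proof (rule virtual_row_decode[OF _ j])
  let ?P = "(\<lambda>l. n + l) ` {m' - t + k..<m'}"
  let ?A = "clean_cols \<union> {j\<in>lost_cols. known j} \<union> ?P"
  have "?A \<subseteq> {j. j < n + m' \<and> VX h j = VY h j}"
  proof -
    have "VX h j = VY h j" if "known j" for j
      using that by (intro col_parity_cong) (simp add: known_def)
    moreover have "VX h l = VY h l" if "l \<in> ?P" for l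
      using that h e_mono global_parity_agree by fastforce
    ultimately show ?thesis
      using clean_col_known by (auto simp: clean_cols_def lost_cols_def)
  qed
  then have "card ?A \<le> card {j. j < n + m' \<and> VX h j = VY h j}"
    by (intro card_mono) auto
  moreover have "card ?A = card clean_cols + card {j\<in>lost_cols. known j} + (t - k)"
  proof -
    have "clean_cols \<inter> {j\<in>lost_cols. known j} = {}"
      by (auto simp: clean_cols_def)
    moreover have "(clean_cols \<union> {j\<in>lost_cols. known j}) \<inter> ?P = {}"
      by (auto simp: clean_cols_def lost_cols_def)
    moreover have "card ?P = t - k"
      using k t_le_m' by (simp add: card_image)
    moreover have "finite clean_cols"
      by (simp add: clean_cols_def)
    ultimately show ?thesis
      using lost_cols_finite by (simp add: card_Un_disjoint)
  qed
  ultimately show "n - m \<le> card {j. j < n + m' \<and> VX h j = VY h j}"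
    using card_clean_cols known_k F_card k by linarith
qed

text \<open>Peeling step, column direction: a lossy column whose first b virtual entries
  are known and which lost at most b sectors has r agreeing coordinates of its
  column codeword, hence is recovered.\<close>
lemma lost_column_recovered:
  assumes j: "j \<in> lost_cols" and b: "card (L j) \<le> b" "b \<le> E"
    and virt: "\<And>h. h < b \<Longrightarrow> VX h j = VY h j"
  shows "known j"
proof -
  let ?cX = "sys_cw r Pcol (\<lambda>i. X i j)" and ?cY = "sys_cw r Pcol (\<lambda>i. Y i j)"
  let ?B = "({..<r} - L j) \<union> (\<lambda>h. r + h) ` {..<b}"
  have Lr: "L j \<subseteq> {..<r}" and jn: "j < n" "j \<notin> F"
    using L_sub lost_cols_sub j by auto
  have agree: "\<forall>c\<in>?B. ?cX c = ?cY c"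
    using surv jn virt by (auto simp: sys_cw_systematic col_parity_def)
  have sub: "?B \<subseteq> {..<r + E}" using b by auto
  have many: "r \<le> card ?B"
  proof -
    have "card ({..<r} - L j) = r - card (L j)"
      using Lr by (simp add: card_Diff_subset finite_subset)
    then have "card ?B = r - card (L j) + b"
      by (subst card_Un_disjoint) (auto simp: card_image inj_on_def)
    then show ?thesis using b by linarith
  qed
  have "?cX i = ?cY i" if "i < r" for i
    using sys_MDS_decode[OF col_MDS sub many agree] that by simp
  then show ?thesis by (simp add: known_def sys_cw_systematic)
qed

lemma loss_profile_count:
  assumes k: "k < t"
  shows "k + 1 \<le> card {j\<in>lost_cols. card (L j) \<le> e ! (m' - t + k)}"
proof -
  define fs where "fs = sort (map (\<lambda>j. card (L j)) (sorted_list_of_set lost_cols))"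
  have "\<forall>i<t. fs ! (t - 1 - i) \<le> e ! (m' - 1 - i)"
    using f_bound unfolding Let_def lost_cols_def[symmetric] fs_def[symmetric] .
  moreover have "t - 1 - k < t" using k by simp
  ultimately have "fs ! (t - 1 - (t - 1 - k)) \<le> e ! (m' - 1 - (t - 1 - k))"
    by blast
  moreover have "t - 1 - (t - 1 - k) = k" "m' - 1 - (t - 1 - k) = m' - t + k"
    using k t_le_m' by auto
  ultimately have "fs ! k \<le> e ! (m' - t + k)" by simp
  then have "{j\<in>lost_cols. card (L j) \<le> fs ! k} \<subseteq> {j\<in>lost_cols. card (L j) \<le> e ! (m' - t + k)}"
    by auto
  then have "card {j\<in>lost_cols. card (L j) \<le> fs ! k}
      \<le> card {j\<in>lost_cols. card (L j) \<le> e ! (m' - t + k)}"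
    using lost_cols_finite by (intro card_mono) auto
  with sorted_rank_count[OF lost_cols_finite k, of "\<lambda>j. card (L j)"] show ?thesis
    unfolding fs_def by linarith
qed

text \<open>Peeling over the lossy columns, with cost |L j| and threshold e_(m'-t+k):
  every surviving column is known.\<close>
lemma surviving_col_known:
  assumes "j \<in> {..<n} - F"
  shows "known j"
proof -
  have "\<forall>j\<in>lost_cols. known j"
  proof (rule peeling[OF lost_cols_finite _ loss_profile_count])
    fix k j
    assume k: "k < t" and known_k: "k \<le> card {j\<in>lost_cols. known j}"
      and j: "j \<in> lost_cols" and loss: "card (L j) \<le> e ! (m' - t + k)"
    have "e ! (m' - t + k) \<le> E"
      using k t_le_m' e_mono by simp
    moreover have "j < n + m'"
      using j lost_cols_sub by auto
    ultimately show "known j"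
      using lost_column_recovered[OF j loss] virtual_row_recovered[OF k known_k] by blast
  qed
  then show ?thesis
    using assms clean_col_known by (auto simp: clean_cols_def)
qed

text \<open>Once all surviving columns are known, each row has n - |F| >= n - m agreeing
  positions and is decoded by the row code.\<close>
lemma stripe_recovered:
  assumes i: "i < r" and j: "j < n + m'"
  shows "X i j = Y i j"
proof -
  let ?K = "{j. j < n + m' \<and> X i j = Y i j}"
  have "{..<n} - F \<subseteq> ?K"
    using surviving_col_known i by (auto simp: known_def)
  then have "card ({..<n} - F) \<le> card ?K"
    by (intro card_mono) auto
  then have many: "n - m \<le> card ?K"
    using card_surviving F_card by linarith
  have sub: "?K \<subseteq> {..<n + m'}" by auto
  have agree: "\<forall>j\<in>?K. sys_cw (n - m) Prow (d i) j = sys_cw (n - m) Prow (d' i) j"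
    by (simp add: stair_stripe_def)
  show ?thesis
    using sys_MDS_decode[OF row_MDS sub many agree j] by (simp add: stair_stripe_def)
qed

end

theorem mainTheorem2:
  fixes n r m m' w :: nat and e :: "nat list"
    and Prow Pcol :: "nat \<Rightarrow> nat \<Rightarrow> 'a::{field,finite}"
    and d d' :: "nat \<Rightarrow> nat \<Rightarrow> 'a"
    and F :: "nat set" and L :: "nat \<Rightarrow> nat set"
  assumes field_card: "card (UNIV :: 'a set) = 2 ^ w"
    and m_bounds: "1 \<le> m" "m < n"
    and m'_bounds: "1 \<le> m'" "m' \<le> n - m"
    and e_len: "length e = m'"
    and e_pos: "\<forall>l<m'. 0 < e ! l"
    and e_sorted: "sorted e"
    and e_le_r: "e ! (m' - 1) \<le> r"
    and size1: "n + m' \<le> 2 ^ w"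
    and size2: "r + e ! (m' - 1) \<le> 2 ^ w"
    and row_MDS: "is_sys_MDS (n + m') (n - m) Prow"
    and col_MDS: "is_sys_MDS (r + e ! (m' - 1)) r Pcol"
    and F_sub: "F \<subseteq> {..<n}" and F_card: "card F \<le> m"
    and L_sub: "\<forall>j\<in>{..<n} - F. L j \<subseteq> {..<r}"
    and t_bound: "card {j \<in> {..<n} - F. L j \<noteq> {}} \<le> m'"
    and f_bound: "let J = {j \<in> {..<n} - F. L j \<noteq> {}};
                      t = card J;
                      fs = sort (map (\<lambda>j. card (L j)) (sorted_list_of_set J))
                  in \<forall>i<t. fs ! (t - 1 - i) \<le> e ! (m' - 1 - i)"
    and surv: "\<forall>i<r. \<forall>j<n. j \<notin> F \<and> i \<notin> L j \<longrightarrow>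
                 stair_stripe n m Prow d i j = stair_stripe n m Prow d' i j"
    and glob: "\<forall>l<m'. \<forall>h<e ! l.
                 stair_global n m r Prow Pcol d h l = stair_global n m r Prow Pcol d' h l"
  shows "(\<forall>i<r. \<forall>j<n. stair_stripe n m Prow d i j = stair_stripe n m Prow d' i j)
         \<and> (\<forall>i<r. \<forall>j<n - m. d i j = d' i j)"
proof -
  interpret stair_repair n r m m' e Prow Pcol d d' F L
    using e_len e_sorted row_MDS col_MDS F_sub F_card L_sub t_bound f_bound surv glob
    by unfold_locales
  have stripe: "\<forall>i<r. \<forall>j<n. stair_stripe n m Prow d i j = stair_stripe n m Prow d' i j"
    using stripe_recovered by simp
  moreover have "\<forall>i<r. \<forall>j<n - m. d i j = d' i j"
  proof (intro allI impI)
    fix i j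
    assume "i < r" and j: "j < n - m"
    then have "stair_stripe n m Prow d i j = stair_stripe n m Prow d' i j"
      using stripe by simp
    with j show "d i j = d' i j"
      by (simp add: stair_stripe_def sys_cw_systematic)
  qed
  ultimately show ?thesis ..
qed

end
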